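(* Let $B_1,B_2$ be independent standard Brownian motions and $\vec B^*=(B_1^*,B_2^* )$ an independent copy of $(B_1,B_2)$; let $\gamma_1,\gamma_2\in[0,2)$ and $a>0$. Then $$C(a):=\int_{\mathbb R^2}\mathbb P\Big(\exists\, t,s_1,s_2\ge 0:\ B_1^*(t)-t+\gamma_1(B_1(s_1)-s_1)>x_1,\ B_2^*(t)-at+\gamma_2(B_2(s_2)-as_2)>x_2\Big)e^{x_1+ax_2}\,dx_1dx_2$$ satisfies $$C(a)\le \frac{16}{a(2-\gamma_1)(2-\gamma_2)}<\infty.$$
   Context: The parameters $t,s_1,s_2$ range independently over $[0,\infty)$. *)

theory Defs
  imports "HOL-Probability.Probability"
begin

definition std_BM :: "'a measure \<Rightarrow> (real \<Rightarrow> 'a \<Rightarrow> real) \<Rightarrow> bool" where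
  "std_BM M B \<longleftrightarrow>
     prob_space M \<and>
     (\<forall>t\<ge>0. B t \<in> borel_measurable M) \<and>
     (\<forall>\<omega>\<in>space M. B 0 \<omega> = 0) \<and>
     (\<forall>\<omega>\<in>space M. continuous_on {0..} (\<lambda>t. B t \<omega>)) \<and>
     (\<forall>s t. 0 \<le> s \<and> s < t \<longrightarrow>
        distributed M lborel (\<lambda>\<omega>. B t \<omega> - B s \<omega>)
          (\<lambda>x. ennreal (normal_density 0 (sqrt (t - s)) x))) \<and>
     (\<forall>(tt :: nat \<Rightarrow> real) n. 0 \<le> tt 0 \<and> strict_mono tt \<longrightarrow>
        prob_space.indep_vars M (\<lambda>_. borel)
          (\<lambda>i \<omega>. B (tt (Suc i)) \<omega> - B (tt i) \<omega>) {..<n})"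

definition indep_processes :: "'a measure \<Rightarrow> (real \<Rightarrow> 'a \<Rightarrow> real) list \<Rightarrow> bool" where
  "indep_processes M Xs \<longleftrightarrow>
     prob_space.indep_vars M (\<lambda>_. PiM (UNIV :: real set) (\<lambda>_. borel))
       (\<lambda>i \<omega>. \<lambda>t. (Xs ! i) t \<omega>) {..<length Xs}"

end

theory Submission
  imports Defs
begin

text \<open>Restrict time to the dyadic grids \<open>{k/2^n | k \<le> n 2^n}\<close>. By path continuity the event is
  the increasing union of its grid versions, and on the \<open>n\<close>-th grid it is contained in
  \<open>{x1 \<le> Z1, x2 \<le> Z2}\<close> with \<open>Z1 = S(B1*, 1) + \<gamma>1 S(B1, 1)\<close> and \<open>Z2 = S(B2*, a) + \<gamma>2 S(B2, a)\<close>,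
  where \<open>S(B, \<mu>)\<close> is the maximum of \<open>B t - \<mu> t\<close> over the grid. Integrating the indicator of
  this quadrant against \<open>e^(x1 + a x2)\<close> gives \<open>E e^(Z1 + a Z2) / a\<close>, which factors by independence.
  Each \<open>S(B, \<mu>)\<close> is the maximum of a Gaussian random walk whose steps \<open>D\<close> satisfy
  \<open>E e^(2\<mu> D) = 1\<close>; this yields \<open>P(S(B, \<mu>) \<ge> x) \<le> e^(-2\<mu>x)\<close> and therefore
  \<open>E e^(\<theta> S(B, \<mu>)) \<le> 2\<mu> / (2\<mu> - \<theta>)\<close>. The four factors are \<open>2, 2/(2-\<gamma>1), 2, 2/(2-\<gamma>2)\<close>.\<close>

lemma nn_integral_exp_atLeast:
  fixes k a :: real
  assumes k: "k > 0"
  shows "(\<integral>\<^sup>+x. ennreal (exp (- k * x)) * indicator {a..} x \<partial>lborel) = ennreal (exp (- k * a) / k)"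
proof -
  have "(\<integral>\<^sup>+x. ennreal (exp (- k * x)) * indicator {a..} x \<partial>lborel) = ennreal (0 - (- exp (- k * a) / k))"
  proof (rule nn_integral_FTC_atLeast)
    show "DERIV (\<lambda>x. - exp (- k * x) / k) x :> exp (- k * x)" for x
      using k by (auto intro!: derivative_eq_intros simp: field_simps)
    have "filterlim (\<lambda>x. - k * x) at_bot at_top"
      using k by (simp add: filterlim_uminus_at_top[symmetric]
          filterlim_tendsto_pos_mult_at_top[OF tendsto_const _ filterlim_ident])
    then have "((\<lambda>x. exp (- k * x)) \<longlongrightarrow> 0) at_top"
      by (rule filterlim_compose[OF exp_at_bot])
    then have "((\<lambda>x. - exp (- k * x) / k) \<longlongrightarrow> - 0 / k) at_top"
      by (intro tendsto_intros) (use k in auto)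
    then show "((\<lambda>x. - exp (- k * x) / k) \<longlongrightarrow> 0) at_top"
      by simp
  qed auto
  then show ?thesis by simp
qed

lemma nn_integral_exp_atMost:
  fixes c r :: real
  assumes c: "c > 0"
  shows "(\<integral>\<^sup>+x. ennreal (exp (c * x)) * indicator {..r} x \<partial>lborel) = ennreal (exp (c * r) / c)"
proof -
  have "(\<integral>\<^sup>+x. ennreal (exp (c * x)) * indicator {..r} x \<partial>lborel) =
     ennreal \<bar>-1\<bar> * (\<integral>\<^sup>+x. ennreal (exp (c * (0 + -1 * x))) * indicator {..r} (0 + -1 * x) \<partial>lborel)"
    by (rule nn_integral_real_affine) auto
  also have "\<dots> = (\<integral>\<^sup>+x. ennreal (exp (- c * x)) * indicator {-r..} x \<partial>lborel)"
    by (simp, intro nn_integral_cong) (auto simp: indicator_def)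
  also have "\<dots> = ennreal (exp (c * r) / c)"
    using nn_integral_exp_atLeast[OF c, of "-r"] by simp
  finally show ?thesis .
qed

lemma nn_integral_exp_quadrant:
  fixes X1 X2 a :: real
  assumes a: "a > 0"
  shows "(\<integral>\<^sup>+x. (if fst x \<le> X1 \<and> snd x \<le> X2 then ennreal (exp (fst x + a * snd x)) else 0) \<partial>lborel)
     = ennreal (exp (X1 + a * X2) / a)"
proof -
  let ?I = "\<lambda>x2. ennreal (exp (a * x2)) * indicator {..X2} x2"
  have "(\<integral>\<^sup>+x. (if fst x \<le> X1 \<and> snd x \<le> X2 then ennreal (exp (fst x + a * snd x)) else 0) \<partial>lborel)
      = (\<integral>\<^sup>+x1. \<integral>\<^sup>+x2. (if x1 \<le> X1 \<and> x2 \<le> X2 then ennreal (exp (x1 + a * x2)) else 0) \<partial>lborel \<partial>lborel)"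
    by (simp add: lborel_prod[symmetric])
      (subst lborel.nn_integral_fst[symmetric], measurable, simp only: fst_conv snd_conv)
  also have "\<dots> = (\<integral>\<^sup>+x1. (ennreal (exp x1) * indicator {..X1} x1) * (\<integral>\<^sup>+x2. ?I x2 \<partial>lborel) \<partial>lborel)"
  proof (intro nn_integral_cong)
    fix x1 :: real
    have "(\<integral>\<^sup>+x2. (if x1 \<le> X1 \<and> x2 \<le> X2 then ennreal (exp (x1 + a * x2)) else 0) \<partial>lborel)
        = (\<integral>\<^sup>+x2. (ennreal (exp x1) * indicator {..X1} x1) * ?I x2 \<partial>lborel)"
      by (intro nn_integral_cong) (simp add: indicator_def exp_add ennreal_mult')
    also have "\<dots> = (ennreal (exp x1) * indicator {..X1} x1) * (\<integral>\<^sup>+x2. ?I x2 \<partial>lborel)"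
      by (rule nn_integral_cmult) measurable
    finally show "(\<integral>\<^sup>+x2. (if x1 \<le> X1 \<and> x2 \<le> X2 then ennreal (exp (x1 + a * x2)) else 0) \<partial>lborel) = \<dots>" .
  qed
  also have "\<dots> = (\<integral>\<^sup>+x1. ennreal (exp x1) * indicator {..X1} x1 \<partial>lborel) * (\<integral>\<^sup>+x2. ?I x2 \<partial>lborel)"
    by (rule nn_integral_multc) measurable
  also have "\<dots> = ennreal (exp X1) * ennreal (exp (a * X2) / a)"
    using nn_integral_exp_atMost[of 1 X1] nn_integral_exp_atMost[OF a, of X2] by simp
  also have "\<dots> = ennreal (exp (X1 + a * X2) / a)"
    by (simp add: ennreal_mult'[symmetric] exp_add)
  finally show ?thesis .
qed

section \<open>Exponential moments through distribution tails\<close>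

lemma borel_measurable_lborel_fst_snd [measurable]:
  "fst \<in> borel_measurable (lborel :: (real \<times> real) measure)"
  "snd \<in> borel_measurable (lborel :: (real \<times> real) measure)"
  by (simp_all add: measurable_lborel1 borel_measurable_continuous_onI continuous_on_fst continuous_on_snd
      continuous_on_id)

lemma (in sigma_finite_measure) measurable_emeasure_quadrant:
  assumes [measurable]: "X \<in> borel_measurable M" "Y \<in> borel_measurable M"
  shows "(\<lambda>x::real \<times> real. emeasure M {\<omega>\<in>space M. fst x \<le> X \<omega> \<and> snd x \<le> Y \<omega>}) \<in> borel_measurable lborel"
proof -
  define Q where "Q = {p \<in> space (lborel \<Otimes>\<^sub>M M). fst (fst p) \<le> X (snd p) \<and> snd (fst p) \<le> Y (snd p)}"
  have "Q \<in> sets (lborel \<Otimes>\<^sub>M M)"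
    unfolding Q_def by measurable
  moreover have "Pair x -` Q = {\<omega>\<in>space M. fst x \<le> X \<omega> \<and> snd x \<le> Y \<omega>}" for x
    by (auto simp: Q_def space_pair_measure)
  ultimately show ?thesis
    using measurable_emeasure_Pair[of Q lborel] by simp
qed

lemma (in sigma_finite_measure) nn_integral_emeasure_quadrant:
  assumes [measurable]: "X \<in> borel_measurable M" "Y \<in> borel_measurable M" and a: "a > 0"
  shows "(\<integral>\<^sup>+x. emeasure M {\<omega>\<in>space M. fst x \<le> X \<omega> \<and> snd x \<le> Y \<omega>} * ennreal (exp (fst x + a * snd x)) \<partial>lborel)
       = (\<integral>\<^sup>+\<omega>. ennreal (exp (X \<omega> + a * Y \<omega>) / a) \<partial>M)"
proof -
  interpret pair_sigma_finite lborel M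
    by (simp add: pair_sigma_finite_def lborel.sigma_finite_measure_axioms sigma_finite_measure_axioms)
  define h where "h x \<omega> = (if fst x \<le> X \<omega> \<and> snd x \<le> Y \<omega> then ennreal (exp (fst x + a * snd x)) else 0)"
    for x :: "real \<times> real" and \<omega>
  have [measurable]: "case_prod h \<in> borel_measurable (lborel \<Otimes>\<^sub>M M)"
    unfolding h_def by measurable
  have "(\<integral>\<^sup>+x. emeasure M {\<omega>\<in>space M. fst x \<le> X \<omega> \<and> snd x \<le> Y \<omega>} * ennreal (exp (fst x + a * snd x)) \<partial>lborel)
      = (\<integral>\<^sup>+x. \<integral>\<^sup>+\<omega>. h x \<omega> \<partial>M \<partial>lborel)"
  proof (intro nn_integral_cong)
    fix x :: "real \<times> real"
    have "(\<integral>\<^sup>+\<omega>. h x \<omega> \<partial>M) = (\<integral>\<^sup>+\<omega>. ennreal (exp (fst x + a * snd x))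
        * indicator {\<omega>\<in>space M. fst x \<le> X \<omega> \<and> snd x \<le> Y \<omega>} \<omega> \<partial>M)"
      by (intro nn_integral_cong) (simp add: h_def indicator_def)
    also have "\<dots> = ennreal (exp (fst x + a * snd x)) * emeasure M {\<omega>\<in>space M. fst x \<le> X \<omega> \<and> snd x \<le> Y \<omega>}"
      by (rule nn_integral_cmult_indicator) measurable
    finally show "emeasure M {\<omega>\<in>space M. fst x \<le> X \<omega> \<and> snd x \<le> Y \<omega>} * ennreal (exp (fst x + a * snd x))
        = (\<integral>\<^sup>+\<omega>. h x \<omega> \<partial>M)"
      by (simp add: mult.commute)
  qed
  also have "\<dots> = (\<integral>\<^sup>+\<omega>. \<integral>\<^sup>+x. h x \<omega> \<partial>lborel \<partial>M)"
    by (rule Fubini'[symmetric]) measurable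
  also have "\<dots> = (\<integral>\<^sup>+\<omega>. ennreal (exp (X \<omega> + a * Y \<omega>) / a) \<partial>M)"
    unfolding h_def by (simp add: nn_integral_exp_quadrant[OF a])
  finally show ?thesis .
qed

lemma (in sigma_finite_measure) nn_integral_exp_eq_tail:
  assumes [measurable]: "S \<in> borel_measurable M" and \<theta>: "\<theta> > 0"
  shows "(\<integral>\<^sup>+\<omega>. ennreal (exp (\<theta> * S \<omega>)) \<partial>M)
       = ennreal \<theta> * (\<integral>\<^sup>+x. ennreal (exp (\<theta> * x)) * emeasure M {\<omega>\<in>space M. x \<le> S \<omega>} \<partial>lborel)"
proof -
  interpret pair_sigma_finite lborel M
    by (simp add: pair_sigma_finite_def lborel.sigma_finite_measure_axioms sigma_finite_measure_axioms)
  define g where "g x \<omega> = (if x \<le> S \<omega> then ennreal (exp (\<theta> * x)) else 0)" for x \<omega>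
  have [measurable]: "case_prod g \<in> borel_measurable (lborel \<Otimes>\<^sub>M M)"
    unfolding g_def by measurable
  have "(\<integral>\<^sup>+x. g x \<omega> \<partial>lborel) = ennreal (exp (\<theta> * S \<omega>) / \<theta>)" for \<omega>
    unfolding nn_integral_exp_atMost[OF \<theta>, symmetric]
    by (intro nn_integral_cong) (simp add: g_def indicator_def)
  then have "(\<integral>\<^sup>+\<omega>. ennreal (exp (\<theta> * S \<omega>)) \<partial>M) = (\<integral>\<^sup>+\<omega>. ennreal \<theta> * \<integral>\<^sup>+x. g x \<omega> \<partial>lborel \<partial>M)"
    using \<theta> by (simp add: ennreal_mult'[symmetric])
  also have "\<dots> = ennreal \<theta> * (\<integral>\<^sup>+\<omega>. \<integral>\<^sup>+x. g x \<omega> \<partial>lborel \<partial>M)"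
    by (rule nn_integral_cmult) measurable
  also have "(\<integral>\<^sup>+\<omega>. \<integral>\<^sup>+x. g x \<omega> \<partial>lborel \<partial>M) = (\<integral>\<^sup>+x. \<integral>\<^sup>+\<omega>. g x \<omega> \<partial>M \<partial>lborel)"
    by (rule Fubini') measurable
  also have "\<dots> = (\<integral>\<^sup>+x. ennreal (exp (\<theta> * x)) * emeasure M {\<omega>\<in>space M. x \<le> S \<omega>} \<partial>lborel)"
    unfolding g_def
    by (intro nn_integral_cong, subst nn_integral_cmult_indicator[symmetric])
      (auto intro!: nn_integral_cong simp: indicator_def)
  finally show ?thesis .
qed

lemma (in prob_space) nn_integral_exp_le_of_exp_tail:
  assumes [measurable]: "S \<in> borel_measurable M" and \<theta>: "0 \<le> \<theta>" "\<theta> < c"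
    and tail: "\<And>x. 0 < x \<Longrightarrow> emeasure M {\<omega>\<in>space M. x \<le> S \<omega>} \<le> ennreal (exp (- c * x))"
  shows "(\<integral>\<^sup>+\<omega>. ennreal (exp (\<theta> * S \<omega>)) \<partial>M) \<le> ennreal (c / (c - \<theta>))"
proof (cases "\<theta> = 0")
  case True
  then show ?thesis using \<theta> by (simp add: emeasure_space_1)
next
  case False
  with \<theta> have \<theta>_pos: "\<theta> > 0" by simp
  have c\<theta>: "c - \<theta> > 0" using \<theta> by simp
  let ?bound = "\<lambda>x. ennreal (exp (\<theta> * x)) * indicator {..0} x + ennreal (exp (- (c - \<theta>) * x)) * indicator {0..} x"
  have "ennreal (exp (\<theta> * x)) * emeasure M {\<omega>\<in>space M. x \<le> S \<omega>} \<le> ?bound x" for x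
  proof (cases "x \<le> 0")
    case True
    have "ennreal (exp (\<theta> * x)) * emeasure M {\<omega>\<in>space M. x \<le> S \<omega>} \<le> ennreal (exp (\<theta> * x))"
      using mult_left_mono[OF emeasure_le_1, of "ennreal (exp (\<theta> * x))"] by simp
    also have "\<dots> \<le> ?bound x"
      using True by (simp add: add_increasing2)
    finally show ?thesis .
  next
    case False
    then have "ennreal (exp (\<theta> * x)) * emeasure M {\<omega>\<in>space M. x \<le> S \<omega>}
        \<le> ennreal (exp (\<theta> * x)) * ennreal (exp (- c * x))"
      by (intro mult_left_mono tail) simp_all
    also have "\<dots> = ennreal (exp (- (c - \<theta>) * x))"
      by (simp add: ennreal_mult'[symmetric] exp_add[symmetric] algebra_simps)
    finally show ?thesis using False by simp
  qed
  then have "(\<integral>\<^sup>+x. ennreal (exp (\<theta> * x)) * emeasure M {\<omega>\<in>space M. x \<le> S \<omega>} \<partial>lborel)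
      \<le> (\<integral>\<^sup>+x. ?bound x \<partial>lborel)"
    by (rule nn_integral_mono)
  also have "\<dots> = ennreal (1 / \<theta> + 1 / (c - \<theta>))"
    using \<theta>_pos c\<theta> nn_integral_exp_atMost[OF \<theta>_pos, of 0] nn_integral_exp_atLeast[OF c\<theta>, of 0]
    by (subst nn_integral_add) (auto simp: ennreal_plus)
  finally have "(\<integral>\<^sup>+\<omega>. ennreal (exp (\<theta> * S \<omega>)) \<partial>M) \<le> ennreal (\<theta> * (1 / \<theta> + 1 / (c - \<theta>)))"
    using \<theta>_pos c\<theta> by (simp add: nn_integral_exp_eq_tail mult_left_mono ennreal_mult)
  also have "\<theta> * (1 / \<theta> + 1 / (c - \<theta>)) = c / (c - \<theta>)"
    using \<theta>_pos c\<theta> by (simp add: field_simps)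
  finally show ?thesis .
qed

section \<open>Maximum of a random walk\<close>

definition walk_max :: "nat \<Rightarrow> (nat \<Rightarrow> real) \<Rightarrow> real" where
  "walk_max n d = Max ((\<lambda>k. \<Sum>i<k. d i) ` {..n})"

lemma walk_max_ge: "k \<le> n \<Longrightarrow> (\<Sum>i<k. d i) \<le> walk_max n d"
  unfolding walk_max_def by (intro Max_ge) auto

lemma walk_max_nonneg: "0 \<le> walk_max n d"
  using walk_max_ge[of 0 n d] by simp

lemma walk_max_0 [simp]: "walk_max 0 d = 0"
  unfolding walk_max_def by simp

lemma walk_max_cong: "(\<And>i. i < n \<Longrightarrow> d i = d' i) \<Longrightarrow> walk_max n d = walk_max n d'"
  unfolding walk_max_def by (intro arg_cong[where f=Max] image_cong refl sum.cong) auto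

lemma walk_max_Suc: "walk_max (Suc n) d = max 0 (d 0 + walk_max n (\<lambda>i. d (Suc i)))"
proof (rule antisym)
  have "(\<Sum>i<k. d i) \<le> max 0 (d 0 + walk_max n (\<lambda>i. d (Suc i)))" if "k \<le> Suc n" for k
  proof (cases k)
    case (Suc k')
    then have "(\<Sum>i<k. d i) = d 0 + (\<Sum>i<k'. d (Suc i))"
      by (simp del: sum.lessThan_Suc add: sum.lessThan_Suc_shift)
    moreover have "(\<Sum>i<k'. d (Suc i)) \<le> walk_max n (\<lambda>i. d (Suc i))"
      using Suc that by (intro walk_max_ge) auto
    ultimately show ?thesis by simp
  qed simp
  then show "walk_max (Suc n) d \<le> max 0 (d 0 + walk_max n (\<lambda>i. d (Suc i)))"
    unfolding walk_max_def[of "Suc n"] by (subst Max_le_iff) auto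
next
  have "walk_max n (\<lambda>i. d (Suc i)) \<in> (\<lambda>k. \<Sum>i<k. d (Suc i)) ` {..n}"
    unfolding walk_max_def by (rule Max_in) auto
  then obtain k where k: "k \<le> n" "walk_max n (\<lambda>i. d (Suc i)) = (\<Sum>i<k. d (Suc i))"
    by auto
  have "d 0 + walk_max n (\<lambda>i. d (Suc i)) = (\<Sum>i<Suc k. d i)"
    using k by (simp del: sum.lessThan_Suc add: sum.lessThan_Suc_shift)
  also have "\<dots> \<le> walk_max (Suc n) d"
    using k by (intro walk_max_ge) auto
  finally show "max 0 (d 0 + walk_max n (\<lambda>i. d (Suc i))) \<le> walk_max (Suc n) d"
    using walk_max_nonneg by simp
qed

lemma walk_max_measurable:
  assumes "\<And>i. i < n \<Longrightarrow> D i \<in> borel_measurable M"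
  shows "(\<lambda>\<omega>. walk_max n (\<lambda>i. D i \<omega>)) \<in> borel_measurable M"
  unfolding walk_max_def by (intro borel_measurable_Max borel_measurable_sum assms) auto

lemma (in prob_space) exp_tail_add_indep:
  fixes X Y :: "'a \<Rightarrow> real"
  assumes ind: "indep_var borel X borel Y"
    and tail: "\<And>y. emeasure M {\<omega>\<in>space M. y \<le> Y \<omega>} \<le> ennreal (exp (- c * y))"
    and mgf: "(\<integral>\<^sup>+\<omega>. ennreal (exp (c * X \<omega>)) \<partial>M) \<le> 1"
  shows "emeasure M {\<omega>\<in>space M. x \<le> X \<omega> + Y \<omega>} \<le> ennreal (exp (- c * x))"
proof -
  have [measurable]: "X \<in> borel_measurable M" "Y \<in> borel_measurable M"
    using ind by (auto dest: indep_var_rv1 indep_var_rv2)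
  interpret PY: prob_space "distr M borel Y" by (rule prob_space_distr) simp
  define S where "S = {p::real\<times>real. x \<le> fst p + snd p}"
  have [measurable]: "S \<in> sets (borel \<Otimes>\<^sub>M borel)"
  proof -
    have "S = {p \<in> space (borel \<Otimes>\<^sub>M borel). x \<le> fst p + snd p}"
      by (auto simp: S_def space_pair_measure)
    also have "\<dots> \<in> sets (borel \<Otimes>\<^sub>M borel)" by measurable
    finally show ?thesis .
  qed
  have "(\<lambda>\<omega>. (X \<omega>, Y \<omega>)) -` S \<inter> space M = {\<omega>\<in>space M. x \<le> X \<omega> + Y \<omega>}"
    by (auto simp: S_def)
  then have "emeasure M {\<omega>\<in>space M. x \<le> X \<omega> + Y \<omega>} =
        emeasure (distr M (borel \<Otimes>\<^sub>M borel) (\<lambda>\<omega>. (X \<omega>, Y \<omega>))) S"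
    by (simp add: emeasure_distr)
  also have "\<dots> = emeasure (distr M borel X \<Otimes>\<^sub>M distr M borel Y) S"
    using ind unfolding indep_var_distribution_eq by simp
  also have "\<dots> = (\<integral>\<^sup>+u. emeasure (distr M borel Y) (Pair u -` S) \<partial>distr M borel X)"
  proof (rule PY.emeasure_pair_measure_alt)
    have "sets (distr M borel X \<Otimes>\<^sub>M distr M borel Y) = sets (borel \<Otimes>\<^sub>M borel)"
      by (intro sets_pair_measure_cong) simp_all
    then show "S \<in> sets (distr M borel X \<Otimes>\<^sub>M distr M borel Y)"
      by simp
  qed
  also have "\<dots> = (\<integral>\<^sup>+u. emeasure M {\<omega>\<in>space M. x - u \<le> Y \<omega>} \<partial>distr M borel X)"
  proof (intro nn_integral_cong)
    fix u
    have "Y -` (Pair u -` S) \<inter> space M = {\<omega>\<in>space M. x - u \<le> Y \<omega>}"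
      by (auto simp: S_def)
    moreover have "Pair u -` S \<in> sets borel"
      by (simp add: S_def)
    ultimately show "emeasure (distr M borel Y) (Pair u -` S) = emeasure M {\<omega>\<in>space M. x - u \<le> Y \<omega>}"
      by (simp add: emeasure_distr)
  qed
  also have "\<dots> \<le> (\<integral>\<^sup>+u. ennreal (exp (- c * (x - u))) \<partial>distr M borel X)"
    by (intro nn_integral_mono tail)
  also have "\<dots> = (\<integral>\<^sup>+\<omega>. ennreal (exp (- c * x)) * ennreal (exp (c * X \<omega>)) \<partial>M)"
    by (subst nn_integral_distr)
      (auto intro!: nn_integral_cong simp: ennreal_mult'[symmetric] exp_add[symmetric] algebra_simps)
  also have "\<dots> = ennreal (exp (- c * x)) * (\<integral>\<^sup>+\<omega>. ennreal (exp (c * X \<omega>)) \<partial>M)"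
    by (rule nn_integral_cmult) simp
  also have "\<dots> \<le> ennreal (exp (- c * x))"
    using mult_left_mono[OF mgf, of "ennreal (exp (- c * x))"] by simp
  finally show ?thesis .
qed

lemma (in prob_space) emeasure_le_exp_of_nonpos:
  assumes "0 \<le> c" "x \<le> 0"
  shows "emeasure M A \<le> ennreal (exp (- c * x))"
proof -
  have "1 \<le> ennreal (exp (- c * x))"
    using assms by (simp add: mult_nonneg_nonpos)
  with emeasure_le_1 show ?thesis
    by (rule order_trans)
qed

text \<open>The index shift \<open>m\<close> makes the induction go through: peeling off the first step leaves
  the walk driven by \<open>D (Suc m)\<close>, \<open>D (Suc m + 1)\<close>, \<dots>\<close>

lemma (in prob_space) walk_max_exp_tail:
  assumes c: "0 \<le> c"
  shows "indep_vars (\<lambda>_. borel) D {m..<m+n} \<Longrightarrow>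
    (\<And>i. m \<le> i \<Longrightarrow> i < m + n \<Longrightarrow> (\<integral>\<^sup>+\<omega>. ennreal (exp (c * D i \<omega>)) \<partial>M) \<le> 1) \<Longrightarrow>
    emeasure M {\<omega>\<in>space M. x \<le> walk_max n (\<lambda>i. D (m + i) \<omega>)} \<le> ennreal (exp (- c * x))"
proof (induction n arbitrary: m x)
  case 0
  show ?case
  proof (cases "x \<le> 0")
    case True
    then show ?thesis by (rule emeasure_le_exp_of_nonpos[OF c])
  qed simp
next
  case (Suc n)
  define V where "V \<omega> = walk_max n (\<lambda>i. D (Suc m + i) \<omega>)" for \<omega>
  have IH: "emeasure M {\<omega>\<in>space M. y \<le> V \<omega>} \<le> ennreal (exp (- c * y))" for y
    unfolding V_def using Suc.prems by (intro Suc.IH indep_vars_subset[OF Suc.prems(1)]) auto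
  have "indep_var borel ((\<lambda>f. f m) \<circ> (\<lambda>\<omega>. restrict (\<lambda>i. D i \<omega>) {m}))
      borel ((\<lambda>f. walk_max n (\<lambda>i. f (Suc m + i))) \<circ> (\<lambda>\<omega>. restrict (\<lambda>i. D i \<omega>) {Suc m..<Suc m + n}))"
    by (intro indep_var_compose[OF indep_var_restrict[OF Suc.prems(1)]] walk_max_measurable
        measurable_component_singleton) auto
  also have "((\<lambda>f. walk_max n (\<lambda>i. f (Suc m + i))) \<circ> (\<lambda>\<omega>. restrict (\<lambda>i. D i \<omega>) {Suc m..<Suc m + n})) = V"
    by (auto simp: V_def fun_eq_iff intro!: walk_max_cong)
  finally have ind: "indep_var borel (D m) borel V"
    by (simp add: comp_def)
  show ?case
  proof (cases "x \<le> 0")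
    case True
    then show ?thesis by (rule emeasure_le_exp_of_nonpos[OF c])
  next
    case False
    then have "{\<omega>\<in>space M. x \<le> walk_max (Suc n) (\<lambda>i. D (m + i) \<omega>)} = {\<omega>\<in>space M. x \<le> D m \<omega> + V \<omega>}"
      by (simp add: walk_max_Suc V_def le_max_iff_disj)
    also have "emeasure M \<dots> \<le> ennreal (exp (- c * x))"
      using Suc.prems(2) by (intro exp_tail_add_indep[OF ind IH]) auto
    finally show ?thesis .
  qed
qed

section \<open>Gaussian exponential moments\<close>

lemma nn_integral_normal_density:
  assumes "s > 0"
  shows "(\<integral>\<^sup>+x. ennreal (normal_density m s x) \<partial>lborel) = 1"
proof -
  interpret prob_space "density lborel (normal_density m s)"
    using assms by (intro prob_space_normal_density)
  show ?thesis
    using emeasure_space_1 by (simp add: emeasure_density)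
qed

lemma normal_density_exp_tilt:
  assumes s: "s > 0"
  shows "normal_density 0 s x * exp (l * x - l\<^sup>2 * s\<^sup>2 / 2) = normal_density (l * s\<^sup>2) s x"
proof -
  have "- (x\<^sup>2 / (2 * s\<^sup>2)) + (l * x - l\<^sup>2 * s\<^sup>2 / 2) = - ((x - l * s\<^sup>2)\<^sup>2 / (2 * s\<^sup>2))"
    using s by (simp add: field_simps power2_eq_square)
  then show ?thesis
    unfolding normal_density_def by (simp add: mult.assoc exp_add[symmetric])
qed

lemma nn_integral_normal_density_exp:
  assumes s: "s > 0"
  shows "(\<integral>\<^sup>+x. ennreal (normal_density 0 s x) * ennreal (exp (l * x - l\<^sup>2 * s\<^sup>2 / 2)) \<partial>lborel) = 1"
  using s by (simp add: ennreal_mult'[symmetric] normal_density_exp_tilt nn_integral_normal_density)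

lemma nn_integral_exp_std_BM_increment:
  assumes B: "std_BM M B" and st: "0 \<le> s" "s < t"
  shows "(\<integral>\<^sup>+\<omega>. ennreal (exp (l * (B t \<omega> - B s \<omega>) - l\<^sup>2 * (t - s) / 2)) \<partial>M) = 1"
proof -
  have "distributed M lborel (\<lambda>\<omega>. B t \<omega> - B s \<omega>) (\<lambda>x. ennreal (normal_density 0 (sqrt (t - s)) x))"
    using B st unfolding std_BM_def by blast
  then have "(\<integral>\<^sup>+\<omega>. ennreal (exp (l * (B t \<omega> - B s \<omega>) - l\<^sup>2 * (t - s) / 2)) \<partial>M) =
    (\<integral>\<^sup>+x. ennreal (normal_density 0 (sqrt (t - s)) x) * ennreal (exp (l * x - l\<^sup>2 * (sqrt (t - s))\<^sup>2 / 2)) \<partial>lborel)"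
    using st by (subst distributed_nn_integral) auto
  also have "\<dots> = 1"
    using st by (intro nn_integral_normal_density_exp) simp
  finally show ?thesis .
qed

section \<open>Maxima over dyadic grids\<close>

definition dyadic_grid :: "nat \<Rightarrow> real set" where
  "dyadic_grid n = (\<lambda>k. real k / 2^n) ` {..n * 2^n}"

lemma finite_dyadic_grid [simp]: "finite (dyadic_grid n)"
  by (simp add: dyadic_grid_def)

lemma dyadic_grid_nonneg: "t \<in> dyadic_grid n \<Longrightarrow> 0 \<le> t"
  by (auto simp: dyadic_grid_def)

lemma zero_in_dyadic_grid: "0 \<in> dyadic_grid n"
  unfolding dyadic_grid_def by (rule image_eqI[of _ _ 0]) auto

lemma dyadic_grid_mono: "dyadic_grid n \<subseteq> dyadic_grid (Suc n)"
proof
  fix t assume "t \<in> dyadic_grid n"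
  then obtain k where k: "k \<le> n * 2^n" "t = real k / 2^n"
    by (auto simp: dyadic_grid_def)
  have "2 * k \<le> Suc n * 2 ^ Suc n"
    using k(1) by simp
  moreover have "t = real (2 * k) / 2 ^ Suc n"
    using k(2) by simp
  ultimately show "t \<in> dyadic_grid (Suc n)"
    unfolding dyadic_grid_def by blast
qed

definition grid_sup :: "real \<Rightarrow> nat \<Rightarrow> (real \<Rightarrow> real) \<Rightarrow> real" where
  "grid_sup \<mu> n f = Max ((\<lambda>t. f t - \<mu> * t) ` dyadic_grid n)"

lemma grid_sup_ge: "t \<in> dyadic_grid n \<Longrightarrow> f t - \<mu> * t \<le> grid_sup \<mu> n f"
  unfolding grid_sup_def by (intro Max_ge) auto

lemma grid_sup_mono: "grid_sup \<mu> n f \<le> grid_sup \<mu> (Suc n) f"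
  unfolding grid_sup_def using dyadic_grid_mono zero_in_dyadic_grid
  by (intro Max_mono image_mono) auto

lemma grid_sup_measurable [measurable]:
  "grid_sup \<mu> n \<in> borel_measurable (Pi\<^sub>M UNIV (\<lambda>_. borel))"
  unfolding grid_sup_def by (intro borel_measurable_Max) auto

lemma std_BM_measurable: "std_BM M B \<Longrightarrow> 0 \<le> t \<Longrightarrow> B t \<in> borel_measurable M"
  unfolding std_BM_def by auto

lemma grid_sup_path_measurable [measurable]:
  assumes "std_BM M B"
  shows "(\<lambda>\<omega>. grid_sup \<mu> n (\<lambda>t. B t \<omega>)) \<in> borel_measurable M"
  unfolding grid_sup_def
proof (intro borel_measurable_Max)
  fix t assume "t \<in> dyadic_grid n"
  then have [measurable]: "B t \<in> borel_measurable M"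
    using assms by (intro std_BM_measurable dyadic_grid_nonneg)
  show "(\<lambda>\<omega>. B t \<omega> - \<mu> * t) \<in> borel_measurable M"
    by measurable
qed simp

lemma grid_sup_eq_walk_max:
  assumes "f 0 = 0"
  shows "grid_sup \<mu> n f = walk_max (n * 2^n) (\<lambda>i. f (real (Suc i) / 2^n) - f (real i / 2^n) - \<mu> / 2^n)"
proof -
  have "(\<Sum>i<k. f (real (Suc i) / 2^n) - f (real i / 2^n) - \<mu> / 2^n) = f (real k / 2^n) - \<mu> * (real k / 2^n)" for k
    using assms by (induction k) (simp_all add: field_simps)
  then show ?thesis
    unfolding grid_sup_def walk_max_def dyadic_grid_def image_image by simp
qed

lemma grid_sup_exp_tail:
  assumes B: "std_BM M B" and \<mu>: "\<mu> > 0"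
  shows "emeasure M {\<omega>\<in>space M. x \<le> grid_sup \<mu> n (\<lambda>t. B t \<omega>)} \<le> ennreal (exp (- (2 * \<mu>) * x))"
proof -
  interpret prob_space M
    using B by (simp add: std_BM_def)
  define h :: real where "h = 1 / 2^n"
  define tt where "tt k = real k / 2^n" for k :: nat
  have tt_Suc: "tt (Suc i) - tt i = h" for i
    by (simp add: tt_def h_def diff_divide_distrib[symmetric])
  have tt_mono: "strict_mono tt"
    by (auto simp: strict_mono_def tt_def divide_strict_right_mono)
  define D where "D i \<omega> = B (tt (Suc i)) \<omega> - B (tt i) \<omega> - \<mu> * h" for i \<omega>
  have "0 \<le> tt 0"
    by (simp add: tt_def)
  then have "indep_vars (\<lambda>_. borel) (\<lambda>i \<omega>. B (tt (Suc i)) \<omega> - B (tt i) \<omega>) {..<n * 2^n}"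
    using B tt_mono unfolding std_BM_def by blast
  from indep_vars_compose2[OF this, of "\<lambda>_ z. z - \<mu> * h" "\<lambda>_. borel"]
  have ind: "indep_vars (\<lambda>_. borel) D {0..<0 + n * 2^n}"
    unfolding D_def[abs_def] by (simp add: atLeast0LessThan)
  \<comment> \<open>A step is \<open>N(-\<mu>h, h)\<close>, so \<open>2\<mu>\<close> is exactly the tilt making its exponential moment \<open>1\<close>.\<close>
  have mgf: "(\<integral>\<^sup>+\<omega>. ennreal (exp ((2 * \<mu>) * D i \<omega>)) \<partial>M) = 1" for i
  proof -
    have "(2 * \<mu>) * D i \<omega> = (2 * \<mu>) * (B (tt (Suc i)) \<omega> - B (tt i) \<omega>) - (2 * \<mu>)\<^sup>2 * (tt (Suc i) - tt i) / 2" for \<omega>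
      by (simp add: D_def tt_Suc power2_eq_square algebra_simps)
    moreover have "0 \<le> tt i" "tt i < tt (Suc i)"
      using strict_monoD[OF tt_mono, of i "Suc i"] by (simp_all add: tt_def)
    ultimately show ?thesis
      by (simp only: nn_integral_exp_std_BM_increment[OF B])
  qed
  have "grid_sup \<mu> n (\<lambda>t. B t \<omega>) = walk_max (n * 2^n) (\<lambda>i. D (0 + i) \<omega>)" if "\<omega> \<in> space M" for \<omega>
    using B that unfolding std_BM_def
    by (simp add: grid_sup_eq_walk_max D_def tt_def h_def)
  then have "{\<omega>\<in>space M. x \<le> grid_sup \<mu> n (\<lambda>t. B t \<omega>)} = {\<omega>\<in>space M. x \<le> walk_max (n * 2^n) (\<lambda>i. D (0 + i) \<omega>)}"
    by auto
  also have "emeasure M \<dots> \<le> ennreal (exp (- (2 * \<mu>) * x))"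
    using \<mu> by (intro walk_max_exp_tail[OF _ ind]) (simp_all add: mgf)
  finally show ?thesis .
qed

lemma grid_sup_mgf:
  assumes B: "std_BM M B" and \<mu>: "\<mu> > 0" and \<theta>: "0 \<le> \<theta>" "\<theta> < 2 * \<mu>"
  shows "(\<integral>\<^sup>+\<omega>. ennreal (exp (\<theta> * grid_sup \<mu> n (\<lambda>t. B t \<omega>))) \<partial>M) \<le> ennreal (2 * \<mu> / (2 * \<mu> - \<theta>))"
proof -
  interpret prob_space M
    using B by (simp add: std_BM_def)
  show ?thesis
    using B \<mu> \<theta> by (intro nn_integral_exp_le_of_exp_tail grid_sup_exp_tail) auto
qed

definition dyadic_ceiling :: "nat \<Rightarrow> real \<Rightarrow> real" where
  "dyadic_ceiling n t = real (nat \<lceil>t * 2^n\<rceil>) / 2^n"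

lemma dyadic_ceiling_bounds:
  assumes "0 \<le> t"
  shows "t \<le> dyadic_ceiling n t" "dyadic_ceiling n t < t + (1/2)^n"
proof -
  have ceil: "real (nat \<lceil>t * 2^n\<rceil>) = of_int \<lceil>t * 2^n\<rceil>"
    using assms by simp
  show "t \<le> dyadic_ceiling n t"
    unfolding dyadic_ceiling_def ceil by (simp add: field_simps)
  have "of_int \<lceil>t * 2^n\<rceil> < t * 2^n + 1" by linarith
  then show "dyadic_ceiling n t < t + (1/2)^n"
    unfolding dyadic_ceiling_def ceil by (simp add: field_simps power_one_over)
qed

lemma dyadic_ceiling_in_grid:
  assumes "0 \<le> t" "t \<le> real n"
  shows "dyadic_ceiling n t \<in> dyadic_grid n"
proof -
  have "\<lceil>t * 2^n\<rceil> \<le> \<lceil>real n * 2^n\<rceil>"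
    using assms by (intro ceiling_mono mult_right_mono) auto
  also have "\<lceil>real n * 2^n\<rceil> = int (n * 2^n)"
    by (metis ceiling_of_nat of_nat_mult of_nat_numeral of_nat_power)
  finally have "nat \<lceil>t * 2^n\<rceil> \<in> {..n * 2^n}"
    by (simp only: atMost_iff nat_le_iff)
  then show ?thesis
    unfolding dyadic_ceiling_def dyadic_grid_def by (rule imageI)
qed

lemma tendsto_dyadic_ceiling:
  assumes "0 \<le> t"
  shows "(\<lambda>n. dyadic_ceiling n t) \<longlonglongrightarrow> t"
proof (rule tendsto_sandwich)
  show "\<forall>\<^sub>F n in sequentially. t \<le> dyadic_ceiling n t" "\<forall>\<^sub>F n in sequentially. dyadic_ceiling n t \<le> t + (1/2)^n"
    using dyadic_ceiling_bounds[OF assms] by (auto intro!: always_eventually less_imp_le)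
  show "(\<lambda>n. t + (1/2::real)^n) \<longlonglongrightarrow> t"
    using tendsto_add[OF tendsto_const LIMSEQ_power_zero[of "1/2::real"]] by simp
qed simp

lemma tendsto_continuous_dyadic_ceiling:
  assumes "continuous_on {0..} f" "0 \<le> t"
  shows "(\<lambda>n. f (dyadic_ceiling n t)) \<longlonglongrightarrow> f t"
  using assms dyadic_ceiling_bounds(1)[OF assms(2)]
  by (intro continuous_on_tendsto_compose[OF assms(1) tendsto_dyadic_ceiling] always_eventually)
    (auto intro: order_trans)

text \<open>Rounding all three times up to the \<open>n\<close>-th grid preserves the strict inequalities for large \<open>n\<close>.\<close>

lemma exists_dyadic_witness:
  fixes f1 g1 f2 g2 :: "real \<Rightarrow> real"
  assumes cont: "continuous_on {0..} f1" "continuous_on {0..} g1" "continuous_on {0..} f2" "continuous_on {0..} g2"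
    and nonneg: "0 \<le> t" "0 \<le> s1" "0 \<le> s2"
    and ineq: "f1 t - t + \<gamma>1 * (g1 s1 - s1) > x1" "f2 t - a * t + \<gamma>2 * (g2 s2 - a * s2) > x2"
  shows "\<exists>n. \<exists>t'\<in>dyadic_grid n. \<exists>s1'\<in>dyadic_grid n. \<exists>s2'\<in>dyadic_grid n.
     f1 t' - t' + \<gamma>1 * (g1 s1' - s1') > x1 \<and> f2 t' - a * t' + \<gamma>2 * (g2 s2' - a * s2') > x2"
proof -
  let ?c = dyadic_ceiling
  have "(\<lambda>n. f1 (?c n t) - ?c n t + \<gamma>1 * (g1 (?c n s1) - ?c n s1)) \<longlonglongrightarrow> f1 t - t + \<gamma>1 * (g1 s1 - s1)"
    using cont nonneg by (intro tendsto_intros tendsto_continuous_dyadic_ceiling tendsto_dyadic_ceiling)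
  from order_tendstoD(1)[OF this ineq(1)]
  have "\<forall>\<^sub>F n in sequentially. f1 (?c n t) - ?c n t + \<gamma>1 * (g1 (?c n s1) - ?c n s1) > x1" .
  moreover have "(\<lambda>n. f2 (?c n t) - a * ?c n t + \<gamma>2 * (g2 (?c n s2) - a * ?c n s2))
      \<longlonglongrightarrow> f2 t - a * t + \<gamma>2 * (g2 s2 - a * s2)"
    using cont nonneg by (intro tendsto_intros tendsto_continuous_dyadic_ceiling tendsto_dyadic_ceiling)
  from order_tendstoD(1)[OF this ineq(2)]
  have "\<forall>\<^sub>F n in sequentially. f2 (?c n t) - a * ?c n t + \<gamma>2 * (g2 (?c n s2) - a * ?c n s2) > x2" .
  moreover obtain N :: nat where N: "max t (max s1 s2) \<le> real N"
    using real_arch_simple by blast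
  then have "\<forall>\<^sub>F n in sequentially. max t (max s1 s2) \<le> real n"
    unfolding eventually_sequentially by (intro exI[of _ N] allI impI order_trans[OF N]) simp
  ultimately obtain n where "f1 (?c n t) - ?c n t + \<gamma>1 * (g1 (?c n s1) - ?c n s1) > x1"
      "f2 (?c n t) - a * ?c n t + \<gamma>2 * (g2 (?c n s2) - a * ?c n s2) > x2" "max t (max s1 s2) \<le> real n"
    using eventually_happens'[OF sequentially_bot] by (metis (mono_tags, lifting) eventually_conj)
  with nonneg show ?thesis
    by (intro exI[of _ n] bexI[of _ "?c n t"] bexI[of _ "?c n s1"] bexI[of _ "?c n s2"] conjI
        dyadic_ceiling_in_grid) auto
qed

lemma indep_processes_nn_integral_prod:
  assumes "prob_space M" and ind: "indep_processes M Xs"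
    and g: "\<And>i. i < length Xs \<Longrightarrow> g i \<in> borel_measurable (Pi\<^sub>M UNIV (\<lambda>_. borel))"
  shows "(\<integral>\<^sup>+\<omega>. (\<Prod>i<length Xs. g i (\<lambda>t. (Xs ! i) t \<omega>)) \<partial>M)
       = (\<Prod>i<length Xs. \<integral>\<^sup>+\<omega>. g i (\<lambda>t. (Xs ! i) t \<omega>) \<partial>M)"
proof -
  interpret prob_space M by fact
  have "indep_vars (\<lambda>_. borel) (\<lambda>i \<omega>. g i (\<lambda>t. (Xs ! i) t \<omega>)) {..<length Xs}"
    using ind unfolding indep_processes_def by (rule indep_vars_compose2) (simp add: g)
  then show ?thesis
    by (rule indep_vars_nn_integral[OF finite_lessThan]) simp
qed

section \<open>The two-dimensional ruin event\<close>

locale four_brownian_motions =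
  fixes M :: "'a measure" and B1 B2 B1s B2s :: "real \<Rightarrow> 'a \<Rightarrow> real" and \<gamma>1 \<gamma>2 a :: real
  assumes std_BM: "std_BM M B1" "std_BM M B2" "std_BM M B1s" "std_BM M B2s"
    and indep: "indep_processes M [B1, B2, B1s, B2s]"
    and \<gamma>1: "0 \<le> \<gamma>1" "\<gamma>1 < 2" and \<gamma>2: "0 \<le> \<gamma>2" "\<gamma>2 < 2" and a_pos: "0 < a"
begin

sublocale prob_space M
  using std_BM(1) by (simp add: std_BM_def)

definition ruin_event :: "real \<times> real \<Rightarrow> 'a set" where
  "ruin_event x = {\<omega>\<in>space M. \<exists>t\<ge>0. \<exists>s1\<ge>0. \<exists>s2\<ge>0.
     B1s t \<omega> - t + \<gamma>1 * (B1 s1 \<omega> - s1) > fst x \<and> B2s t \<omega> - a * t + \<gamma>2 * (B2 s2 \<omega> - a * s2) > snd x}"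

definition grid_ruin_event :: "nat \<Rightarrow> real \<times> real \<Rightarrow> 'a set" where
  "grid_ruin_event n x = {\<omega>\<in>space M. \<exists>t\<in>dyadic_grid n. \<exists>s1\<in>dyadic_grid n. \<exists>s2\<in>dyadic_grid n.
     B1s t \<omega> - t + \<gamma>1 * (B1 s1 \<omega> - s1) > fst x \<and> B2s t \<omega> - a * t + \<gamma>2 * (B2 s2 \<omega> - a * s2) > snd x}"

lemma ruin_event_eq_Union: "ruin_event x = (\<Union>n. grid_ruin_event n x)"
proof
  show "(\<Union>n. grid_ruin_event n x) \<subseteq> ruin_event x"
    unfolding ruin_event_def grid_ruin_event_def using dyadic_grid_nonneg by blast
  show "ruin_event x \<subseteq> (\<Union>n. grid_ruin_event n x)"
  proof
    fix \<omega> assume "\<omega> \<in> ruin_event x"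
    then obtain t s1 s2 where \<omega>: "\<omega> \<in> space M" and nonneg: "0 \<le> t" "0 \<le> s1" "0 \<le> s2"
      and ineq: "B1s t \<omega> - t + \<gamma>1 * (B1 s1 \<omega> - s1) > fst x" "B2s t \<omega> - a * t + \<gamma>2 * (B2 s2 \<omega> - a * s2) > snd x"
      unfolding ruin_event_def by blast
    have cont: "continuous_on {0..} (\<lambda>t. B t \<omega>)" if "std_BM M B" for B
      using that \<omega> unfolding std_BM_def by auto
    show "\<omega> \<in> (\<Union>n. grid_ruin_event n x)"
      using exists_dyadic_witness[OF cont[OF std_BM(3)] cont[OF std_BM(1)] cont[OF std_BM(4)] cont[OF std_BM(2)]
          nonneg ineq] \<omega>
      unfolding grid_ruin_event_def by blast
  qed
qed

lemma sets_ruin_event: "ruin_event x \<in> sets M"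
proof -
  have [measurable]: "B t \<in> borel_measurable M" if "std_BM M B" "t \<in> dyadic_grid n" for B t n
    using that by (intro std_BM_measurable dyadic_grid_nonneg)
  have "grid_ruin_event n x \<in> sets M" for n
    unfolding grid_ruin_event_def using std_BM by measurable
  then show ?thesis
    unfolding ruin_event_eq_Union by blast
qed

definition Z1 :: "nat \<Rightarrow> 'a \<Rightarrow> real" where
  "Z1 n \<omega> = grid_sup 1 n (\<lambda>t. B1s t \<omega>) + \<gamma>1 * grid_sup 1 n (\<lambda>t. B1 t \<omega>)"

definition Z2 :: "nat \<Rightarrow> 'a \<Rightarrow> real" where
  "Z2 n \<omega> = grid_sup a n (\<lambda>t. B2s t \<omega>) + \<gamma>2 * grid_sup a n (\<lambda>t. B2 t \<omega>)"

lemmas grid_sup_paths_measurable [measurable] =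
  grid_sup_path_measurable[OF std_BM(1)] grid_sup_path_measurable[OF std_BM(2)]
  grid_sup_path_measurable[OF std_BM(3)] grid_sup_path_measurable[OF std_BM(4)]

lemma Z_measurable [measurable]: "Z1 n \<in> borel_measurable M" "Z2 n \<in> borel_measurable M"
  unfolding Z1_def Z2_def by measurable

definition quadrant_event :: "nat \<Rightarrow> real \<times> real \<Rightarrow> 'a set" where
  "quadrant_event n x = {\<omega>\<in>space M. fst x \<le> Z1 n \<omega> \<and> snd x \<le> Z2 n \<omega>}"

lemma sets_quadrant_event [measurable]: "quadrant_event n x \<in> sets M"
  unfolding quadrant_event_def by measurable

lemma grid_ruin_event_subset: "grid_ruin_event n x \<subseteq> quadrant_event n x"
proof
  fix \<omega> assume "\<omega> \<in> grid_ruin_event n x"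
  then obtain t s1 s2 where \<omega>: "\<omega> \<in> space M" and grid: "t \<in> dyadic_grid n" "s1 \<in> dyadic_grid n" "s2 \<in> dyadic_grid n"
    and ineq: "B1s t \<omega> - t + \<gamma>1 * (B1 s1 \<omega> - s1) > fst x" "B2s t \<omega> - a * t + \<gamma>2 * (B2 s2 \<omega> - a * s2) > snd x"
    unfolding grid_ruin_event_def by blast
  have "B1s t \<omega> - t \<le> grid_sup 1 n (\<lambda>t. B1s t \<omega>)" "B1 s1 \<omega> - s1 \<le> grid_sup 1 n (\<lambda>t. B1 t \<omega>)"
    "B2s t \<omega> - a * t \<le> grid_sup a n (\<lambda>t. B2s t \<omega>)" "B2 s2 \<omega> - a * s2 \<le> grid_sup a n (\<lambda>t. B2 t \<omega>)"
    using grid_sup_ge[OF grid(1), of _ 1] grid_sup_ge[OF grid(2), of _ 1]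
      grid_sup_ge[OF grid(1), of _ a] grid_sup_ge[OF grid(3), of _ a] by simp_all
  moreover from this(2,4) have "\<gamma>1 * (B1 s1 \<omega> - s1) \<le> \<gamma>1 * grid_sup 1 n (\<lambda>t. B1 t \<omega>)"
    "\<gamma>2 * (B2 s2 \<omega> - a * s2) \<le> \<gamma>2 * grid_sup a n (\<lambda>t. B2 t \<omega>)"
    using \<gamma>1 \<gamma>2 by (simp_all add: mult_left_mono)
  ultimately show "\<omega> \<in> quadrant_event n x"
    using \<omega> ineq unfolding quadrant_event_def Z1_def Z2_def by auto
qed

lemma incseq_quadrant_event: "incseq (\<lambda>n. quadrant_event n x)"
proof (rule incseq_SucI)
  have "Z1 n \<omega> \<le> Z1 (Suc n) \<omega>" "Z2 n \<omega> \<le> Z2 (Suc n) \<omega>" for n \<omega>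
    unfolding Z1_def Z2_def using \<gamma>1 \<gamma>2 by (intro add_mono mult_left_mono grid_sup_mono; simp)+
  then show "quadrant_event n x \<subseteq> quadrant_event (Suc n) x" for n
    unfolding quadrant_event_def by (auto intro: order_trans)
qed

lemma nn_integral_exp_Z_eq_prod:
  "(\<integral>\<^sup>+\<omega>. ennreal (exp (Z1 n \<omega> + a * Z2 n \<omega>) / a) \<partial>M) = ennreal (1 / a)
     * (\<integral>\<^sup>+\<omega>. ennreal (exp (\<gamma>1 * grid_sup 1 n (\<lambda>t. B1 t \<omega>))) \<partial>M)
     * (\<integral>\<^sup>+\<omega>. ennreal (exp ((a * \<gamma>2) * grid_sup a n (\<lambda>t. B2 t \<omega>))) \<partial>M)
     * (\<integral>\<^sup>+\<omega>. ennreal (exp (1 * grid_sup 1 n (\<lambda>t. B1s t \<omega>))) \<partial>M)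
     * (\<integral>\<^sup>+\<omega>. ennreal (exp (a * grid_sup a n (\<lambda>t. B2s t \<omega>))) \<partial>M)"
proof -
  define Xs where "Xs = [B1, B2, B1s, B2s]"
  define \<theta> where "\<theta> = [\<gamma>1, a * \<gamma>2, 1, a]"
  define \<mu> where "\<mu> = [1, a, 1, a]"
  define g where "g i f = ennreal (exp (\<theta> ! i * grid_sup (\<mu> ! i) n f))" for i f
  have four: "{..<length Xs} = {0, 1, 2, 3}"
    by (auto simp: Xs_def)
  have "ennreal (exp (Z1 n \<omega> + a * Z2 n \<omega>) / a) = ennreal (1 / a) * (\<Prod>i<length Xs. g i (\<lambda>t. (Xs ! i) t \<omega>))"
    for \<omega>
    using a_pos by (simp add: four g_def Xs_def \<theta>_def \<mu>_def Z1_def Z2_def algebra_simps exp_add ennreal_mult'[symmetric])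
  then have "(\<integral>\<^sup>+\<omega>. ennreal (exp (Z1 n \<omega> + a * Z2 n \<omega>) / a) \<partial>M)
      = (\<integral>\<^sup>+\<omega>. ennreal (1 / a) * (\<Prod>i<length Xs. g i (\<lambda>t. (Xs ! i) t \<omega>)) \<partial>M)"
    by simp
  also have "\<dots> = ennreal (1 / a) * (\<integral>\<^sup>+\<omega>. (\<Prod>i<length Xs. g i (\<lambda>t. (Xs ! i) t \<omega>)) \<partial>M)"
    by (rule nn_integral_cmult) (simp add: four g_def Xs_def)
  also have "\<dots> = ennreal (1 / a) * (\<Prod>i<length Xs. \<integral>\<^sup>+\<omega>. g i (\<lambda>t. (Xs ! i) t \<omega>) \<partial>M)"
    using indep prob_space_axioms unfolding Xs_def
    by (subst indep_processes_nn_integral_prod) (auto simp: g_def[abs_def])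
  finally show ?thesis
    by (simp add: four g_def Xs_def \<theta>_def \<mu>_def mult.assoc)
qed

lemma nn_integral_exp_Z:
  "(\<integral>\<^sup>+\<omega>. ennreal (exp (Z1 n \<omega> + a * Z2 n \<omega>) / a) \<partial>M) \<le> ennreal (16 / (a * (2 - \<gamma>1) * (2 - \<gamma>2)))"
proof -
  have "(\<integral>\<^sup>+\<omega>. ennreal (exp (\<gamma>1 * grid_sup 1 n (\<lambda>t. B1 t \<omega>))) \<partial>M) \<le> ennreal (2 / (2 - \<gamma>1))"
    using grid_sup_mgf[OF std_BM(1), of 1 \<gamma>1] \<gamma>1 by simp
  moreover have "(\<integral>\<^sup>+\<omega>. ennreal (exp ((a * \<gamma>2) * grid_sup a n (\<lambda>t. B2 t \<omega>))) \<partial>M) \<le> ennreal (2 / (2 - \<gamma>2))"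
  proof -
    have "2 * a / (2 * a - a * \<gamma>2) = 2 / (2 - \<gamma>2)"
      using a_pos \<gamma>2 by (simp add: field_simps)
    then show ?thesis
      using grid_sup_mgf[OF std_BM(2), of a "a * \<gamma>2"] a_pos \<gamma>2 by simp
  qed
  moreover have "(\<integral>\<^sup>+\<omega>. ennreal (exp (1 * grid_sup 1 n (\<lambda>t. B1s t \<omega>))) \<partial>M) \<le> 2"
    using grid_sup_mgf[OF std_BM(3), of 1 1] by simp
  moreover have "(\<integral>\<^sup>+\<omega>. ennreal (exp (a * grid_sup a n (\<lambda>t. B2s t \<omega>))) \<partial>M) \<le> 2"
    using grid_sup_mgf[OF std_BM(4), of a a] a_pos by simp
  ultimately have "(\<integral>\<^sup>+\<omega>. ennreal (exp (Z1 n \<omega> + a * Z2 n \<omega>) / a) \<partial>M)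
      \<le> ennreal (1 / a) * ennreal (2 / (2 - \<gamma>1)) * ennreal (2 / (2 - \<gamma>2)) * 2 * 2"
    unfolding nn_integral_exp_Z_eq_prod by (intro mult_mono) auto
  also have "\<dots> = ennreal (16 / (a * (2 - \<gamma>1) * (2 - \<gamma>2)))"
    using a_pos \<gamma>1 \<gamma>2 by (simp add: ennreal_mult'[symmetric] ennreal_numeral[symmetric] del: ennreal_numeral)
  finally show ?thesis .
qed

lemma nn_integral_ruin_event:
  "(\<integral>\<^sup>+x. ennreal (measure M (ruin_event x) * exp (fst x + a * snd x)) \<partial>lborel)
     \<le> ennreal (16 / (a * (2 - \<gamma>1) * (2 - \<gamma>2)))"
proof -
  let ?w = "\<lambda>x::real \<times> real. ennreal (exp (fst x + a * snd x))"
  have "emeasure M (ruin_event x) \<le> emeasure M (\<Union>n. quadrant_event n x)" for x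
    unfolding ruin_event_eq_Union by (intro emeasure_mono UN_mono grid_ruin_event_subset) auto
  also have "emeasure M (\<Union>n. quadrant_event n x) = (SUP n. emeasure M (quadrant_event n x))" for x
    using incseq_quadrant_event by (intro SUP_emeasure_incseq[symmetric]) auto
  finally have "(\<integral>\<^sup>+x. ennreal (measure M (ruin_event x) * exp (fst x + a * snd x)) \<partial>lborel)
      \<le> (\<integral>\<^sup>+x. (SUP n. emeasure M (quadrant_event n x) * ?w x) \<partial>lborel)"
    by (intro nn_integral_mono)
      (simp add: sets_ruin_event emeasure_eq_measure ennreal_mult SUP_mult_right_ennreal[symmetric] mult_right_mono)
  also have "\<dots> = (SUP n. \<integral>\<^sup>+x. emeasure M (quadrant_event n x) * ?w x \<partial>lborel)"
    using incseq_quadrant_event measurable_emeasure_quadrant[OF Z_measurable]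
    by (intro nn_integral_monotone_convergence_SUP incseq_SucI le_funI mult_right_mono emeasure_mono)
      (auto simp: quadrant_event_def incseq_Suc_iff measurable_lborel1)
  also have "\<dots> \<le> ennreal (16 / (a * (2 - \<gamma>1) * (2 - \<gamma>2)))"
    using nn_integral_exp_Z a_pos
    by (simp add: SUP_le_iff quadrant_event_def nn_integral_emeasure_quadrant)
  finally show ?thesis .
qed

end

theorem mainTheorem2:
  fixes M :: "'a measure"
    and B1 B2 B1s B2s :: "real \<Rightarrow> 'a \<Rightarrow> real"
    and \<gamma>1 \<gamma>2 a :: real
  assumes "std_BM M B1" and "std_BM M B2" and "std_BM M B1s" and "std_BM M B2s"
    and "indep_processes M [B1, B2, B1s, B2s]"
    and "0 \<le> \<gamma>1" and "\<gamma>1 < 2" and "0 \<le> \<gamma>2" and "\<gamma>2 < 2"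
    and "0 < a"
  defines "E \<equiv> \<lambda>(x1::real, x2::real). {\<omega> \<in> space M. \<exists>t\<ge>0. \<exists>s1\<ge>0. \<exists>s2\<ge>0.
              B1s t \<omega> - t + \<gamma>1 * (B1 s1 \<omega> - s1) > x1 \<and>
              B2s t \<omega> - a * t + \<gamma>2 * (B2 s2 \<omega> - a * s2) > x2}"
  shows "(\<forall>x. E x \<in> sets M) \<and>
         (\<integral>\<^sup>+ x. ennreal (measure M (E x) * exp (fst x + a * snd x)) \<partial>lborel)
           \<le> ennreal (16 / (a * (2 - \<gamma>1) * (2 - \<gamma>2)))"
proof -
  interpret four_brownian_motions M B1 B2 B1s B2s \<gamma>1 \<gamma>2 a
    using assms by unfold_locales
  have "E = ruin_event"
    by (intro ext) (simp add: E_def ruin_event_def split: prod.split)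
  then show ?thesis
    using sets_ruin_event nn_integral_ruin_event by simp
qed

end
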